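(* Let $\alpha=(a_1,\ldots,a_k)$ be a composition of a positive integer $n$. Then \[\zeta_-(M_\alpha)=\begin{cases}\dfrac{(-1)^{k_e(\alpha)}}{2^{2\lfloor k_o(\alpha)/2\rfloor}}\,C\bigl(0,\lfloor k_o(\alpha)/2\rfloor\bigr) & \text{if } a_k \text{ is odd},\\ 0 & \text{if } a_k\text{ is even;}\end{cases}\] \[\zeta_+(M_\alpha)=\begin{cases}\dfrac{(-1)^{k_e(\alpha)+1}}{2^{k_o(\alpha)}}\,C\bigl(1,k_o(\alpha)/2-1\bigr) & \text{if } a_1 \text{ and } a_k \text{ are odd and } n \text{ is even},\\ 1 & \text{if } \alpha=(n) \text{ and } n \text{ is even},\\ 0&\text{otherwise.}\end{cases}\] Also $\zeta_-(1)=\zeta_+(1)=1$.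
   Context: $\Bbbk$ is a field of characteristic $\neq 2$. A composition $\alpha=(a_1,\ldots,a_k)$ of $n\ge 0$ is a sequence of positive integers with sum $|\alpha|=n$; $k(\alpha)=k$ is its number of parts, $k_e(\alpha)$ and $k_o(\alpha)$ its numbers of even and odd parts; $()$ is the empty composition. ${\mathcal{Q}Sym}$ is the Hopf algebra of quasi-symmetric functions over $\Bbbk$ (in variables $x_1,x_2,\ldots$), graded by degree and connected, with monomial basis $M_\alpha=\sum_{i_1<\cdots<i_k}x_{i_1}^{a_1}\cdots x_{i_k}^{a_k}$ ($M_{()}=1$), product the ordinary product, coproduct $\Delta(M_\alpha)=\sum_{i=0}^k M_{(a_1,\ldots,a_i)}\otimes M_{(a_{i+1},\ldots,a_k)}$ and counit $\epsilon(M_\alpha)=1$ if $\alpha=()$, $0$ otherwise. Convolution of functionals: $\rho\psi=m\circ(\rho\otimes\psi)\circ\Delta$. Characters are algebra morphisms ${\mathcal{Q}Sym}\to\Bbbk$; they form a group under convolution. For a functional $\varphi$, $\bar\varphi(h)=(-1)^n\varphi(h)$ on homogeneous $h$ of degree $n$; $\varphi$ is even if $\bar\varphi=\varphi$, odd if $\bar\varphi=\varphi^{-1}$. Every character $\varphi$ factors uniquely as $\varphi=\varphi_+\varphi_-$ with $\varphi_+$ an even character and $\varphi_-$ an odd character. The universal character $\zeta$ is $\zeta(f)=f(1,0,0,\ldots)$; thus $\zeta(M_\alpha)=1$ if $\alpha=()$ or $\alpha=(n)$, and $0$ otherwise. $\zeta_+,\zeta_-$ denote its even and odd parts. The bivariate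 Catalan numbers are $C(m,n)=\frac{(2m)!(2n)!}{m!(m+n)!n!}$. *)

theory Defs
  imports Main
begin

text \<open>A linear functional on QSym is
represented by its values on the monomial basis, i.e. a function on compositions
(taken to be 0 on lists that are not compositions).\<close>

definition is_comp :: "nat list \<Rightarrow> bool" where
  "is_comp \<alpha> \<longleftrightarrow> (\<forall>a \<in> set \<alpha>. 0 < a)"

text \<open>Quasi-shuffle (stuffle) product: M_xs * M_ys = sum of M_g over g in qsh xs ys
(with multiplicity).\<close>
fun qsh :: "nat list \<Rightarrow> nat list \<Rightarrow> nat list list" where
  "qsh [] ys = [ys]"
| "qsh xs [] = [xs]"
| "qsh (x # xs) (y # ys) =
     map (Cons x) (qsh xs (y # ys)) @ map (Cons y) (qsh (x # xs) ys) @ map (Cons (x + y)) (qsh xs ys)"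

definition conv :: "(nat list \<Rightarrow> 'a::field) \<Rightarrow> (nat list \<Rightarrow> 'a) \<Rightarrow> nat list \<Rightarrow> 'a" where
  "conv \<rho> \<psi> \<alpha> = (\<Sum>i = 0..length \<alpha>. \<rho> (take i \<alpha>) * \<psi> (drop i \<alpha>))"

definition counit :: "nat list \<Rightarrow> 'a::field" where
  "counit \<alpha> = (if \<alpha> = [] then 1 else 0)"

definition bar :: "(nat list \<Rightarrow> 'a::field) \<Rightarrow> nat list \<Rightarrow> 'a" where
  "bar \<phi> \<alpha> = (-1) ^ sum_list \<alpha> * \<phi> \<alpha>"

definition is_character :: "(nat list \<Rightarrow> 'a::field) \<Rightarrow> bool" where
  "is_character \<phi> \<longleftrightarrow> \<phi> [] = 1 \<and> (\<forall>\<alpha>. \<not> is_comp \<alpha> \<longrightarrow> \<phi> \<alpha> = 0) \<and>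
     (\<forall>\<alpha> \<beta>. is_comp \<alpha> \<longrightarrow> is_comp \<beta> \<longrightarrow> \<phi> \<alpha> * \<phi> \<beta> = sum_list (map \<phi> (qsh \<alpha> \<beta>)))"

definition is_even_fun :: "(nat list \<Rightarrow> 'a::field) \<Rightarrow> bool" where
  "is_even_fun \<phi> \<longleftrightarrow> (\<forall>\<alpha>. is_comp \<alpha> \<longrightarrow> bar \<phi> \<alpha> = \<phi> \<alpha>)"

definition is_odd_fun :: "(nat list \<Rightarrow> 'a::field) \<Rightarrow> bool" where
  "is_odd_fun \<phi> \<longleftrightarrow> (\<forall>\<alpha>. is_comp \<alpha> \<longrightarrow>
      conv (bar \<phi>) \<phi> \<alpha> = counit \<alpha> \<and> conv \<phi> (bar \<phi>) \<alpha> = counit \<alpha>)"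

definition zeta :: "nat list \<Rightarrow> 'a::field" where
  "zeta \<alpha> = (if is_comp \<alpha> \<and> length \<alpha> \<le> 1 then 1 else 0)"

definition zeta_pm :: "(nat list \<Rightarrow> 'a::field) \<times> (nat list \<Rightarrow> 'a)" where
  "zeta_pm = (THE (p, m). is_character p \<and> is_even_fun p \<and> is_character m \<and> is_odd_fun m \<and>
      (\<forall>\<alpha>. is_comp \<alpha> \<longrightarrow> zeta \<alpha> = conv p m \<alpha>))"

definition zeta_plus :: "nat list \<Rightarrow> 'a::field" where
  "zeta_plus = fst zeta_pm"

definition zeta_minus :: "nat list \<Rightarrow> 'a::field" where
  "zeta_minus = snd zeta_pm"

text \<open>Bivariate Catalan numbers (always integers).\<close>
definition bicat :: "nat \<Rightarrow> nat \<Rightarrow> nat" where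
  "bicat m n = fact (2*m) * fact (2*n) div (fact m * fact (m + n) * fact n)"

definition k_even :: "nat list \<Rightarrow> nat" where
  "k_even \<alpha> = length (filter even \<alpha>)"

definition k_odd :: "nat list \<Rightarrow> nat" where
  "k_odd \<alpha> = length (filter odd \<alpha>)"

end

theory Submission
  imports Defs "HOL-Computational_Algebra.Formal_Power_Series"
begin

text \<open>The factorization is unique when \<open>2\<close> is invertible (induction on the degree), so it suffices
  to exhibit one. Let \<open>c j = C(2j, j) / 4^j\<close> be the coefficients of \<open>(1 - x)^(-1/2)\<close>, so that
  \<open>c 0 * c n + ... + c n * c 0 = 1\<close>, and let \<open>\<zeta>\<^sub>-(M\<^sub>\<alpha>) = (-1)^k\<^sub>e(\<alpha>) * c (k\<^sub>o(\<alpha>) div 2)\<close> if \<open>\<alpha>\<close>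
  ends with an odd part and \<open>0\<close> otherwise. Sorting the deconcatenations of \<open>\<alpha>\<close> by the parity of the
  number of odd parts of the prefix, that identity shows that the convolution square of \<open>\<zeta>\<^sub>-\<close> is the
  character \<open>\<chi> \<zeta>\<close> with \<open>\<chi>(M\<^sub>\<alpha>) = (-1)^k\<^sub>e(\<alpha>)\<close>, and that \<open>\<zeta>\<^sub>-\<close> is odd. A square root of a character
  is a character, because square roots taking the value \<open>1\<close> at \<open>1\<close> are unique in the dual of
  \<open>QSym \<otimes> QSym\<close>. Then \<open>\<zeta>\<^sub>+ = \<zeta> \<zeta>\<^sub>-\<^sup>-\<^sup>1\<close> is \<open>\<zeta>\<close> convolved with \<open>bar \<zeta>\<^sub>-\<close>, and its values come from
  \<open>c t - c (t + 1) = C(1, t) / 4^(t + 1)\<close>.\<close>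

section \<open>Compositions and quasi-shuffles\<close>

lemma qsh_Nil2 [simp]: "qsh xs [] = [xs]"
  by (cases xs) auto

lemma is_comp_Nil [simp]: "is_comp []"
  and is_comp_Cons [simp]: "is_comp (x # xs) \<longleftrightarrow> 0 < x \<and> is_comp xs"
  and is_comp_append [simp]: "is_comp (xs @ ys) \<longleftrightarrow> is_comp xs \<and> is_comp ys"
  by (auto simp: is_comp_def)

lemma is_comp_take: "is_comp \<alpha> \<Longrightarrow> is_comp (take i \<alpha>)"
  by (auto simp: is_comp_def dest: in_set_takeD)

lemma is_comp_drop: "is_comp \<alpha> \<Longrightarrow> is_comp (drop i \<alpha>)"
  by (auto simp: is_comp_def dest: in_set_dropD)

lemma is_comp_qsh: "is_comp \<alpha> \<Longrightarrow> is_comp \<beta> \<Longrightarrow> \<forall>\<gamma>\<in>set (qsh \<alpha> \<beta>). is_comp \<gamma>"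
proof (induction \<alpha> \<beta> rule: qsh.induct)
  case (3 x xs y ys)
  from "3.prems" have "0 < x" "0 < y" "is_comp xs" "is_comp ys" by simp_all
  with "3.IH" show ?case by auto
qed simp_all

lemma sum_list_qsh: "\<gamma> \<in> set (qsh \<alpha> \<beta>) \<Longrightarrow> sum_list \<gamma> = sum_list \<alpha> + sum_list \<beta>"
  by (induction \<alpha> \<beta> arbitrary: \<gamma> rule: qsh.induct) auto

lemma length_qsh: "\<gamma> \<in> set (qsh \<alpha> \<beta>) \<Longrightarrow> length \<alpha> \<le> length \<gamma> \<and> length \<beta> \<le> length \<gamma>"
  by (induction \<alpha> \<beta> arbitrary: \<gamma> rule: qsh.induct) fastforce+

lemma sum_list_take_pos: "is_comp \<alpha> \<Longrightarrow> 0 < i \<Longrightarrow> i \<le> length \<alpha> \<Longrightarrow> 0 < sum_list (take i \<alpha>)"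
  by (cases \<alpha>; cases i) auto

lemma sum_list_drop_pos: "is_comp \<alpha> \<Longrightarrow> i < length \<alpha> \<Longrightarrow> 0 < sum_list (drop i \<alpha>)"
  by (subst Cons_nth_drop_Suc[symmetric]) (auto simp: is_comp_def)

lemma sum_list_take_drop: "sum_list (take i \<alpha>) + sum_list (drop i \<alpha>) = sum_list \<alpha>"
  by (metis append_take_drop_id sum_list_append)

lemma sum_list_pieces_less:
  assumes "is_comp \<alpha>" and "is_comp \<beta>"
    and "(i, j) \<in> {0..length \<alpha>} \<times> {0..length \<beta>} - {(0, 0), (length \<alpha>, length \<beta>)}"
  shows "sum_list (take i \<alpha>) + sum_list (take j \<beta>) < sum_list \<alpha> + sum_list \<beta>"
    and "sum_list (drop i \<alpha>) + sum_list (drop j \<beta>) < sum_list \<alpha> + sum_list \<beta>"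
proof -
  have "0 < i \<or> 0 < j" "i < length \<alpha> \<or> j < length \<beta>" "i \<le> length \<alpha>" "j \<le> length \<beta>"
    using assms(3) by auto
  then have "0 < sum_list (take i \<alpha>) + sum_list (take j \<beta>)" "0 < sum_list (drop i \<alpha>) + sum_list (drop j \<beta>)"
    using sum_list_take_pos[OF assms(1), of i] sum_list_take_pos[OF assms(2), of j]
      sum_list_drop_pos[OF assms(1), of i] sum_list_drop_pos[OF assms(2), of j] by auto
  with sum_list_take_drop[of i \<alpha>] sum_list_take_drop[of j \<beta>]
  show "sum_list (take i \<alpha>) + sum_list (take j \<beta>) < sum_list \<alpha> + sum_list \<beta>"
    and "sum_list (drop i \<alpha>) + sum_list (drop j \<beta>) < sum_list \<alpha> + sum_list \<beta>"
    by linarith+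
qed

lemma k_even_Nil [simp]: "k_even [] = 0"
  and k_even_Cons: "k_even (x # xs) = (if even x then Suc (k_even xs) else k_even xs)"
  and k_even_append [simp]: "k_even (xs @ ys) = k_even xs + k_even ys"
  by (simp_all add: k_even_def)

lemma k_odd_Nil [simp]: "k_odd [] = 0"
  and k_odd_Cons: "k_odd (x # xs) = (if odd x then Suc (k_odd xs) else k_odd xs)"
  and k_odd_append [simp]: "k_odd (xs @ ys) = k_odd xs + k_odd ys"
  by (simp_all add: k_odd_def)

lemma neg1_power_sum_list: "(-1::'a::ring_1) ^ sum_list \<gamma> = (-1) ^ k_odd \<gamma>"
  by (induction \<gamma>) (auto simp: k_odd_Cons power_add)

lemma even_sum_list_iff: "even (sum_list \<gamma>) \<longleftrightarrow> even (k_odd \<gamma>)"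
  by (induction \<gamma>) (auto simp: k_odd_Cons)

lemma one_le_k_odd: "\<gamma> \<noteq> [] \<Longrightarrow> odd (last \<gamma>) \<Longrightarrow> 1 \<le> k_odd \<gamma>"
  by (induction \<gamma>) (auto simp: k_odd_Cons split: if_splits)

lemma sum_qsh_k_even_sign:
  "(\<Sum>\<gamma>\<leftarrow>qsh \<alpha> \<beta>. (-1::'a::comm_ring_1) ^ k_even \<gamma>) = (-1) ^ k_even \<alpha> * (-1) ^ k_even \<beta>"
proof (induction \<alpha> \<beta> rule: qsh.induct)
  case (3 x xs y ys)
  define s :: "nat \<Rightarrow> 'a" where "s z = (if even z then -1 else 1)" for z
  have sign_Cons: "(-1::'a) ^ k_even (z # g) = s z * (-1) ^ k_even g" for z g
    by (simp add: s_def k_even_Cons)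
  have "(\<Sum>\<gamma>\<leftarrow>qsh (x # xs) (y # ys). (-1::'a) ^ k_even \<gamma>)
      = s x * (\<Sum>\<gamma>\<leftarrow>qsh xs (y # ys). (-1) ^ k_even \<gamma>) + s y * (\<Sum>\<gamma>\<leftarrow>qsh (x # xs) ys. (-1) ^ k_even \<gamma>)
        + s (x + y) * (\<Sum>\<gamma>\<leftarrow>qsh xs ys. (-1) ^ k_even \<gamma>)"
    by (simp add: o_def sign_Cons sum_list_const_mult)
  also have "\<dots> = (s x * s y + s y * s x + s (x + y)) * ((-1) ^ k_even xs * (-1) ^ k_even ys)"
    unfolding "3.IH" sign_Cons by (simp add: algebra_simps)
  also have "s x * s y + s y * s x + s (x + y) = s x * s y"
    by (simp add: s_def)
  finally show ?case
    by (simp add: sign_Cons ac_simps)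
qed simp_all

section \<open>Convolution\<close>

lemma conv_split:
  assumes "\<alpha> \<noteq> []"
  shows "conv f g \<alpha> = f [] * g \<alpha> + f \<alpha> * g [] + (\<Sum>i\<in>{1..<length \<alpha>}. f (take i \<alpha>) * g (drop i \<alpha>))"
proof -
  have "{0..length \<alpha>} = insert 0 (insert (length \<alpha>) {1..<length \<alpha>})"
    using assms by auto
  then show ?thesis
    using assms by (simp add: conv_def)
qed

lemma conv_assoc: "conv (conv f g) h \<alpha> = conv f (conv g h) \<alpha>"
proof -
  let ?G = "\<lambda>i j. f (take i \<alpha>) * g (take j (drop i \<alpha>)) * h (drop j (drop i \<alpha>))"
  have "conv (conv f g) h \<alpha> = (\<Sum>k\<le>length \<alpha>. \<Sum>i\<le>k. ?G i (k - i))"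
    unfolding conv_def atLeast0AtMost sum_distrib_right
    by (intro sum.cong refl) (auto simp: min_absorb1 drop_take)
  also have "\<dots> = (\<Sum>(i, j) \<in> {(i, j). i + j \<le> length \<alpha>}. ?G i j)"
    by (rule sum.triangle_reindex_eq[symmetric])
  also have "\<dots> = (\<Sum>i\<le>length \<alpha>. \<Sum>j\<le>length \<alpha> - i. ?G i j)"
    by (subst sum.Sigma) (auto intro!: sum.cong)
  also have "\<dots> = conv f (conv g h) \<alpha>"
    unfolding conv_def atLeast0AtMost sum_distrib_left by (simp add: mult.assoc)
  finally show ?thesis .
qed

lemma conv_counit_right: "conv f counit \<alpha> = f \<alpha>"
proof -
  have "{0..length \<alpha>} = insert (length \<alpha>) {0..<length \<alpha>}"
    by auto
  then show ?thesis
    by (simp add: conv_def counit_def)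
qed

lemma conv_zeta_right:
  fixes f :: "nat list \<Rightarrow> 'a::field"
  assumes "is_comp (\<beta> @ [a])"
  shows "conv f zeta (\<beta> @ [a]) = f \<beta> + f (\<beta> @ [a])"
proof -
  let ?g = "\<beta> @ [a]"
  have "conv f zeta ?g = (\<Sum>i<length \<beta>. f (take i ?g) * zeta (drop i ?g)) + f \<beta> * zeta [a] + f ?g * zeta []"
    by (simp add: conv_def atLeast0AtMost lessThan_Suc_atMost[symmetric] del: lessThan_Suc)
  also have "(\<Sum>i<length \<beta>. f (take i ?g) * zeta (drop i ?g)) = 0"
    by (intro sum.neutral ballI) (simp add: zeta_def)
  moreover have "(zeta [] :: 'a) = 1" and "(zeta [a] :: 'a) = 1"
    using assms by (simp_all add: zeta_def)
  ultimately show ?thesis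
    by simp
qed

lemma conv_zeta_left:
  fixes f :: "nat list \<Rightarrow> 'a::field"
  assumes "is_comp (a # \<beta>)"
  shows "conv zeta f (a # \<beta>) = f (a # \<beta>) + f \<beta>"
proof -
  have "conv zeta f (a # \<beta>) = zeta [] * f (a # \<beta>) + zeta [a] * f \<beta>
      + (\<Sum>i=Suc 0..length \<beta>. zeta (a # take i \<beta>) * f (drop i \<beta>))"
    unfolding conv_def length_Cons sum.atLeast0_atMost_Suc_shift by (simp add: sum.atLeast_Suc_atMost)
  also have "(\<Sum>i=Suc 0..length \<beta>. zeta (a # take i \<beta>) * f (drop i \<beta>)) = 0"
    by (intro sum.neutral ballI) (simp add: zeta_def)
  moreover have "(zeta [] :: 'a) = 1" and "(zeta [a] :: 'a) = 1"
    using assms by (simp_all add: zeta_def)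
  ultimately show ?thesis
    by simp
qed

lemma bar_conv: "bar (conv f g) \<alpha> = conv (bar f) (bar g) \<alpha>"
  unfolding bar_def conv_def sum_distrib_left
proof (intro sum.cong refl)
  fix i
  have "(-1::'a) ^ sum_list \<alpha> = (-1) ^ sum_list (take i \<alpha>) * (-1) ^ sum_list (drop i \<alpha>)"
    by (metis power_add sum_list_take_drop)
  then show "(-1) ^ sum_list \<alpha> * (f (take i \<alpha>) * g (drop i \<alpha>))
      = (-1) ^ sum_list (take i \<alpha>) * f (take i \<alpha>) * ((-1) ^ sum_list (drop i \<alpha>) * (g (drop i \<alpha>) :: 'a))"
    by (simp add: ac_simps)
qed

lemma bar_bar [simp]: "bar (bar f) = f"
  by (simp add: bar_def fun_eq_iff flip: mult.assoc power_add)

lemma bar_eq_k_odd_sign: "bar f \<gamma> = (-1) ^ k_odd \<gamma> * f \<gamma>"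
  by (simp add: bar_def neg1_power_sum_list)

text \<open>Since \<open>bar\<close> is an involution compatible with convolution, a left inverse of the form \<open>bar m\<close> is
  also a right inverse.\<close>
lemma is_odd_funI:
  assumes "\<And>\<alpha>. is_comp \<alpha> \<Longrightarrow> conv (bar m) m \<alpha> = counit \<alpha>"
  shows "is_odd_fun m"
proof -
  have "conv m (bar m) \<alpha> = counit \<alpha>" if "is_comp \<alpha>" for \<alpha>
  proof -
    have "conv m (bar m) \<alpha> = bar (conv (bar m) m) \<alpha>"
      by (simp add: bar_conv)
    also have "\<dots> = counit \<alpha>"
      using assms[OF that] by (simp add: bar_def counit_def)
    finally show ?thesis .
  qed
  with assms show ?thesis
    by (simp add: is_odd_fun_def)
qed

definition deconc_sum :: "(nat list \<Rightarrow> nat list \<Rightarrow> 'b::comm_monoid_add) \<Rightarrow> nat list \<Rightarrow> 'b" where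
  "deconc_sum h \<gamma> = (\<Sum>l=0..length \<gamma>. h (take l \<gamma>) (drop l \<gamma>))"

definition deconc_qsh_sum ::
    "(nat list \<Rightarrow> nat list \<Rightarrow> 'b::comm_monoid_add) \<Rightarrow> nat list \<Rightarrow> nat list \<Rightarrow> 'b" where
  "deconc_qsh_sum h \<alpha> \<beta> = (\<Sum>i=0..length \<alpha>. \<Sum>j=0..length \<beta>.
      \<Sum>\<gamma>\<^sub>1\<leftarrow>qsh (take i \<alpha>) (take j \<beta>). \<Sum>\<gamma>\<^sub>2\<leftarrow>qsh (drop i \<alpha>) (drop j \<beta>). h \<gamma>\<^sub>1 \<gamma>\<^sub>2)"

lemma deconc_sum_Cons: "deconc_sum h (z # \<gamma>) = h [] (z # \<gamma>) + deconc_sum (\<lambda>a b. h (z # a) b) \<gamma>"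
  unfolding deconc_sum_def length_Cons sum.atLeast0_atMost_Suc_shift by simp

lemma deconc_qsh_sum_Cons_Cons:
  fixes h :: "nat list \<Rightarrow> nat list \<Rightarrow> 'b::comm_monoid_add"
  shows "deconc_qsh_sum h (x # xs) (y # ys) = (\<Sum>\<gamma>\<leftarrow>qsh (x # xs) (y # ys). h [] \<gamma>)
     + deconc_qsh_sum (\<lambda>a b. h (x # a) b) xs (y # ys) + deconc_qsh_sum (\<lambda>a b. h (y # a) b) (x # xs) ys
     + deconc_qsh_sum (\<lambda>a b. h ((x + y) # a) b) xs ys"
proof -
  let ?X = "x # xs" and ?Y = "y # ys"
  define T where "T i j = (\<Sum>\<gamma>\<^sub>1\<leftarrow>qsh (take i ?X) (take j ?Y). \<Sum>\<gamma>\<^sub>2\<leftarrow>qsh (drop i ?X) (drop j ?Y). h \<gamma>\<^sub>1 \<gamma>\<^sub>2)" for i j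
  define A where "A z u v i j = (\<Sum>\<gamma>\<^sub>1\<leftarrow>qsh u v. \<Sum>\<gamma>\<^sub>2\<leftarrow>qsh (drop i xs) (drop j ys). h (z # \<gamma>\<^sub>1) \<gamma>\<^sub>2)" for z u v i j
  have T_Suc_Suc: "T (Suc i) (Suc j) = A x (take i xs) (y # take j ys) i j
      + A y (x # take i xs) (take j ys) i j + A (x + y) (take i xs) (take j ys) i j" for i j
    by (simp add: T_def A_def o_def sum_list_addf add.assoc)
  have "deconc_qsh_sum h ?X ?Y = T 0 0 + (\<Sum>j=0..length ys. T 0 (Suc j)) + (\<Sum>i=0..length xs. T (Suc i) 0)
      + (\<Sum>i=0..length xs. \<Sum>j=0..length ys. T (Suc i) (Suc j))"
    unfolding deconc_qsh_sum_def T_def[symmetric] length_Cons sum.atLeast0_atMost_Suc_shift sum.distrib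
    by (simp only: ac_simps o_def)
  moreover have "deconc_qsh_sum (\<lambda>a b. h (x # a) b) xs ?Y = (\<Sum>i=0..length xs. T (Suc i) 0)
      + (\<Sum>i=0..length xs. \<Sum>j=0..length ys. A x (take i xs) (y # take j ys) i j)"
    unfolding deconc_qsh_sum_def length_Cons sum.atLeast0_atMost_Suc_shift sum.distrib
    by (simp add: T_def A_def o_def)
  moreover have "deconc_qsh_sum (\<lambda>a b. h (y # a) b) ?X ys = (\<Sum>j=0..length ys. T 0 (Suc j))
      + (\<Sum>i=0..length xs. \<Sum>j=0..length ys. A y (x # take i xs) (take j ys) i j)"
    unfolding deconc_qsh_sum_def length_Cons sum.atLeast0_atMost_Suc_shift sum.distrib
    by (simp add: T_def A_def o_def)
  moreover have "deconc_qsh_sum (\<lambda>a b. h ((x + y) # a) b) xs ys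
      = (\<Sum>i=0..length xs. \<Sum>j=0..length ys. A (x + y) (take i xs) (take j ys) i j)"
    unfolding deconc_qsh_sum_def A_def by simp
  moreover have "T 0 0 = (\<Sum>\<gamma>\<leftarrow>qsh ?X ?Y. h [] \<gamma>)"
    by (simp add: T_def)
  ultimately show ?thesis
    unfolding T_Suc_Suc by (simp add: sum.distrib algebra_simps)
qed

text \<open>The coproduct is multiplicative: \<open>\<Delta>(M\<^sub>\<alpha> M\<^sub>\<beta>) = \<Delta>(M\<^sub>\<alpha>) \<Delta>(M\<^sub>\<beta>)\<close>, both sides
  paired with \<open>h\<close>.\<close>
lemma sum_qsh_deconc_sum: "(\<Sum>\<gamma>\<leftarrow>qsh \<alpha> \<beta>. deconc_sum h \<gamma>) = deconc_qsh_sum h \<alpha> \<beta>"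
proof (induction \<alpha> \<beta> arbitrary: h rule: qsh.induct)
  case (3 x xs y ys)
  then show ?case
    by (simp add: deconc_qsh_sum_Cons_Cons deconc_sum_Cons o_def sum_list_addf ac_simps)
qed (simp_all add: deconc_qsh_sum_def deconc_sum_def del: take_Cons drop_Cons)

definition qsh_eval :: "(nat list \<Rightarrow> 'a::field) \<Rightarrow> nat list \<Rightarrow> nat list \<Rightarrow> 'a" where
  "qsh_eval f \<alpha> \<beta> = (\<Sum>\<gamma>\<leftarrow>qsh \<alpha> \<beta>. f \<gamma>)"

text \<open>Convolution of functionals on \<open>QSym \<otimes> QSym\<close>, whose coproduct deconcatenates both factors.\<close>
definition conv_pair :: "(nat list \<Rightarrow> nat list \<Rightarrow> 'a::field) \<Rightarrow> (nat list \<Rightarrow> nat list \<Rightarrow> 'a)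
    \<Rightarrow> nat list \<Rightarrow> nat list \<Rightarrow> 'a" where
  "conv_pair F G \<alpha> \<beta> = (\<Sum>i=0..length \<alpha>. \<Sum>j=0..length \<beta>.
      F (take i \<alpha>) (take j \<beta>) * G (drop i \<alpha>) (drop j \<beta>))"

lemma qsh_eval_conv: "qsh_eval (conv f g) \<alpha> \<beta> = conv_pair (qsh_eval f) (qsh_eval g) \<alpha> \<beta>"
proof -
  have "qsh_eval (conv f g) \<alpha> \<beta> = (\<Sum>\<gamma>\<leftarrow>qsh \<alpha> \<beta>. deconc_sum (\<lambda>a b. f a * g b) \<gamma>)"
    by (simp add: qsh_eval_def conv_def deconc_sum_def)
  also have "\<dots> = conv_pair (qsh_eval f) (qsh_eval g) \<alpha> \<beta>"
    by (simp add: sum_qsh_deconc_sum deconc_qsh_sum_def conv_pair_def qsh_eval_def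
        sum_list_mult_const sum_list_const_mult)
  finally show ?thesis .
qed

lemma conv_mult_conv:
  "conv f g \<alpha> * conv f' g' \<beta> = conv_pair (\<lambda>a b. f a * f' b) (\<lambda>a b. g a * g' b) \<alpha> \<beta>"
  unfolding conv_def conv_pair_def sum_distrib_left sum_distrib_right
  by (subst sum.swap) (simp add: ac_simps)

section \<open>Characters and their square roots\<close>

lemma is_characterI:
  assumes "\<phi> [] = 1" and "\<And>\<alpha>. \<not> is_comp \<alpha> \<Longrightarrow> \<phi> \<alpha> = 0"
    and "\<And>\<alpha> \<beta>. is_comp \<alpha> \<Longrightarrow> is_comp \<beta> \<Longrightarrow> \<phi> \<alpha> * \<phi> \<beta> = qsh_eval \<phi> \<alpha> \<beta>"
  shows "is_character \<phi>"
  using assms by (simp add: is_character_def qsh_eval_def)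

lemma is_characterD:
  assumes "is_character \<phi>"
  shows "\<phi> [] = 1" and "\<not> is_comp \<alpha> \<Longrightarrow> \<phi> \<alpha> = 0"
    and "is_comp \<alpha> \<Longrightarrow> is_comp \<beta> \<Longrightarrow> \<phi> \<alpha> * \<phi> \<beta> = qsh_eval \<phi> \<alpha> \<beta>"
  using assms by (simp_all add: is_character_def qsh_eval_def)

lemma is_character_conv:
  assumes f: "is_character f" and g: "is_character g"
  shows "is_character (conv f g)"
proof (rule is_characterI)
  show "conv f g [] = 1"
    using f g by (simp add: conv_def is_characterD)
next
  fix \<alpha> :: "nat list"
  assume "\<not> is_comp \<alpha>"
  then have "\<not> is_comp (take i \<alpha>) \<or> \<not> is_comp (drop i \<alpha>)" for i
    by (metis append_take_drop_id is_comp_append)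
  then have "f (take i \<alpha>) * g (drop i \<alpha>) = 0" for i
    using f g by (metis is_characterD(2) mult_eq_0_iff)
  then show "conv f g \<alpha> = 0"
    unfolding conv_def by (intro sum.neutral) blast
next
  fix \<alpha> \<beta> :: "nat list"
  assume \<alpha>: "is_comp \<alpha>" and \<beta>: "is_comp \<beta>"
  have "conv f g \<alpha> * conv f g \<beta> = conv_pair (\<lambda>a b. f a * f b) (\<lambda>a b. g a * g b) \<alpha> \<beta>"
    by (rule conv_mult_conv)
  also have "\<dots> = conv_pair (qsh_eval f) (qsh_eval g) \<alpha> \<beta>"
    unfolding conv_pair_def using \<alpha> \<beta> f g
    by (intro sum.cong refl) (simp add: is_characterD is_comp_take is_comp_drop)
  also have "\<dots> = qsh_eval (conv f g) \<alpha> \<beta>"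
    by (rule qsh_eval_conv[symmetric])
  finally show "conv f g \<alpha> * conv f g \<beta> = qsh_eval (conv f g) \<alpha> \<beta>" .
qed

lemma is_character_bar:
  assumes f: "is_character f"
  shows "is_character (bar f)"
proof (rule is_characterI)
  fix \<alpha> \<beta> :: "nat list"
  assume "is_comp \<alpha>" "is_comp \<beta>"
  then have "bar f \<alpha> * bar f \<beta> = (-1) ^ (sum_list \<alpha> + sum_list \<beta>) * qsh_eval f \<alpha> \<beta>"
    using f by (simp add: bar_def power_add is_characterD)
  also have "\<dots> = qsh_eval (bar f) \<alpha> \<beta>"
    by (auto simp: qsh_eval_def bar_def sum_list_qsh simp flip: sum_list_const_mult
        intro!: arg_cong[where f = sum_list] map_cong)
  finally show "bar f \<alpha> * bar f \<beta> = qsh_eval (bar f) \<alpha> \<beta>" .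
qed (use f in \<open>simp_all add: bar_def is_characterD\<close>)

lemma is_character_zeta: "is_character (zeta :: nat list \<Rightarrow> 'a::field)"
proof (rule is_characterI)
  fix \<alpha> \<beta> :: "nat list"
  assume \<alpha>: "is_comp \<alpha>" and \<beta>: "is_comp \<beta>"
  consider "\<alpha> = [] \<or> \<beta> = []" | x y where "\<alpha> = [x]" "\<beta> = [y]" | "2 \<le> length \<alpha> \<or> 2 \<le> length \<beta>"
    by (cases \<alpha> rule: remdups_adj.cases; cases \<beta> rule: remdups_adj.cases) auto
  then show "(zeta \<alpha> :: 'a) * zeta \<beta> = qsh_eval zeta \<alpha> \<beta>"
  proof cases
    case 3
    have vanish: "(zeta \<gamma> :: 'a) = 0" if "\<gamma> \<in> set (qsh \<alpha> \<beta>)" for \<gamma>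
      using 3 length_qsh[OF that] by (auto simp: zeta_def)
    have "(zeta \<alpha> :: 'a) * zeta \<beta> = 0"
      using 3 by (auto simp: zeta_def)
    also have "\<dots> = qsh_eval zeta \<alpha> \<beta>"
      unfolding qsh_eval_def by (simp add: vanish cong: map_cong)
    finally show ?thesis .
  qed (use \<alpha> \<beta> in \<open>auto simp: zeta_def qsh_eval_def\<close>)
qed (simp_all add: zeta_def)

definition even_sign :: "nat list \<Rightarrow> 'a::field" where
  "even_sign \<gamma> = (if is_comp \<gamma> then (-1) ^ k_even \<gamma> else 0)"

lemma is_character_even_sign: "is_character (even_sign :: nat list \<Rightarrow> 'a::field)"
proof (rule is_characterI)
  fix \<alpha> \<beta> :: "nat list"
  assume \<alpha>: "is_comp \<alpha>" and \<beta>: "is_comp \<beta>"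
  have "qsh_eval even_sign \<alpha> \<beta> = (\<Sum>\<gamma>\<leftarrow>qsh \<alpha> \<beta>. (-1::'a) ^ k_even \<gamma>)"
    unfolding qsh_eval_def using is_comp_qsh[OF \<alpha> \<beta>] by (simp add: even_sign_def cong: map_cong)
  then show "even_sign \<alpha> * even_sign \<beta> = (qsh_eval even_sign \<alpha> \<beta> :: 'a)"
    using \<alpha> \<beta> by (simp add: sum_qsh_k_even_sign even_sign_def)
qed (simp_all add: even_sign_def)

lemma conv_pair_self_split:
  assumes "H [] [] = 1" and "\<alpha> \<noteq> [] \<or> \<beta> \<noteq> []"
  shows "conv_pair H H \<alpha> \<beta> = 2 * H \<alpha> \<beta> +
    (\<Sum>(i, j) \<in> {0..length \<alpha>} \<times> {0..length \<beta>} - {(0, 0), (length \<alpha>, length \<beta>)}.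
       H (take i \<alpha>) (take j \<beta>) * H (drop i \<alpha>) (drop j \<beta>))"
proof -
  define t where "t = (\<lambda>(i, j). H (take i \<alpha>) (take j \<beta>) * H (drop i \<alpha>) (drop j \<beta>))"
  define I where "I = {0..length \<alpha>} \<times> {0..length \<beta>}"
  have "conv_pair H H \<alpha> \<beta> = sum t I"
    by (simp add: conv_pair_def I_def t_def sum.cartesian_product)
  also have "\<dots> = t (0, 0) + sum t (I - {(0, 0)})"
    by (rule sum.remove) (auto simp: I_def)
  also have "sum t (I - {(0, 0)}) = t (length \<alpha>, length \<beta>) + sum t (I - {(0, 0)} - {(length \<alpha>, length \<beta>)})"
    by (rule sum.remove) (use assms(2) in \<open>auto simp: I_def\<close>)
  also have "I - {(0, 0)} - {(length \<alpha>, length \<beta>)} = I - {(0, 0), (length \<alpha>, length \<beta>)}"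
    by blast
  finally show ?thesis
    using assms(1) by (simp add: t_def I_def)
qed

text \<open>The top-degree term of \<open>F * F\<close> at \<open>(\<alpha>, \<beta>)\<close> is \<open>2 F(\<alpha>, \<beta>)\<close>; all other terms involve only
  pairs of lower degree.\<close>
lemma conv_pair_square_unique:
  fixes F G :: "nat list \<Rightarrow> nat list \<Rightarrow> 'a::field"
  assumes two: "(2::'a) \<noteq> 0" and F: "F [] [] = 1" and G: "G [] [] = 1"
    and square: "\<And>\<alpha> \<beta>. is_comp \<alpha> \<Longrightarrow> is_comp \<beta> \<Longrightarrow> conv_pair F F \<alpha> \<beta> = conv_pair G G \<alpha> \<beta>"
  shows "is_comp \<alpha> \<Longrightarrow> is_comp \<beta> \<Longrightarrow> F \<alpha> \<beta> = G \<alpha> \<beta>"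
proof (induction "sum_list \<alpha> + sum_list \<beta>" arbitrary: \<alpha> \<beta> rule: less_induct)
  case less
  show ?case
  proof (cases "\<alpha> \<noteq> [] \<or> \<beta> \<noteq> []")
    case nonempty: True
    let ?J = "{0..length \<alpha>} \<times> {0..length \<beta>} - {(0, 0), (length \<alpha>, length \<beta>)}"
    have "(\<lambda>(i, j). F (take i \<alpha>) (take j \<beta>) * F (drop i \<alpha>) (drop j \<beta>)) p
        = (\<lambda>(i, j). G (take i \<alpha>) (take j \<beta>) * G (drop i \<alpha>) (drop j \<beta>)) p" if "p \<in> ?J" for p
    proof -
      obtain i j where p: "p = (i, j)"
        by fastforce
      with that have "(i, j) \<in> ?J"
        by simp
      from sum_list_pieces_less[OF less.prems this] show ?thesis
        using less.hyps less.prems by (simp add: p is_comp_take is_comp_drop)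
    qed
    then have "(\<Sum>(i, j)\<in>?J. F (take i \<alpha>) (take j \<beta>) * F (drop i \<alpha>) (drop j \<beta>))
        = (\<Sum>(i, j)\<in>?J. G (take i \<alpha>) (take j \<beta>) * G (drop i \<alpha>) (drop j \<beta>))"
      by (rule sum.cong[OF refl])
    then have "conv_pair F F \<alpha> \<beta> - 2 * F \<alpha> \<beta> = conv_pair G G \<alpha> \<beta> - 2 * G \<alpha> \<beta>"
      unfolding conv_pair_self_split[of F, OF F nonempty] conv_pair_self_split[of G, OF G nonempty]
      by simp
    then show ?thesis
      using square[OF less.prems] two by simp
  qed (use F G in simp)
qed

text \<open>Both \<open>(\<alpha>, \<beta>) \<mapsto> m \<alpha> * m \<beta>\<close> and \<open>qsh_eval m\<close> are square roots of \<open>(\<alpha>, \<beta>) \<mapsto> P \<alpha> * P \<beta>\<close>.\<close>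
lemma is_character_sqrt:
  fixes m P :: "nat list \<Rightarrow> 'a::field"
  assumes two: "(2::'a) \<noteq> 0" and P: "is_character P" and m_Nil: "m [] = 1"
    and m_not_comp: "\<And>\<alpha>. \<not> is_comp \<alpha> \<Longrightarrow> m \<alpha> = 0"
    and square: "\<And>\<gamma>. is_comp \<gamma> \<Longrightarrow> conv m m \<gamma> = P \<gamma>"
  shows "is_character m"
proof (rule is_characterI)
  fix \<alpha> \<beta> :: "nat list"
  assume \<alpha>: "is_comp \<alpha>" and \<beta>: "is_comp \<beta>"
  have "conv_pair (\<lambda>a b. m a * m b) (\<lambda>a b. m a * m b) x y = conv_pair (qsh_eval m) (qsh_eval m) x y"
    if x: "is_comp x" and y: "is_comp y" for x y
  proof -
    have "conv_pair (\<lambda>a b. m a * m b) (\<lambda>a b. m a * m b) x y = P x * P y"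
      by (simp add: square x y flip: conv_mult_conv)
    also have "\<dots> = qsh_eval (conv m m) x y"
      unfolding is_characterD(3)[OF P x y] qsh_eval_def
      using is_comp_qsh[OF x y] by (simp add: square cong: map_cong)
    finally show ?thesis
      by (simp add: qsh_eval_conv)
  qed
  from conv_pair_square_unique[OF two _ _ this \<alpha> \<beta>]
  show "m \<alpha> * m \<beta> = qsh_eval m \<alpha> \<beta>"
    by (simp add: m_Nil qsh_eval_def)
qed (simp_all add: m_Nil m_not_comp)

section \<open>Uniqueness of the even-odd factorization\<close>

lemma even_fun_odd_weight:
  fixes q :: "nat list \<Rightarrow> 'a::field"
  assumes "(2::'a) \<noteq> 0" and "is_even_fun q" and "is_comp \<alpha>" and "odd (sum_list \<alpha>)"
  shows "q \<alpha> = 0"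
proof -
  have "bar q \<alpha> = q \<alpha>"
    using assms(2,3) by (simp add: is_even_fun_def)
  then have "- q \<alpha> = q \<alpha>"
    using assms(4) by (simp add: bar_def)
  then have "2 * q \<alpha> = 0"
    by (metis mult_2 neg_eq_iff_add_eq_0)
  then show ?thesis
    using assms(1) by simp
qed

lemma odd_fun_even_weight:
  fixes m :: "nat list \<Rightarrow> 'a::field"
  assumes "is_odd_fun m" and "m [] = 1" and "is_comp \<alpha>" and "\<alpha> \<noteq> []" and "even (sum_list \<alpha>)"
  shows "2 * m \<alpha> + (\<Sum>i\<in>{1..<length \<alpha>}. bar m (take i \<alpha>) * m (drop i \<alpha>)) = 0"
proof -
  have "conv (bar m) m \<alpha> = counit \<alpha>"
    using assms(1,3) unfolding is_odd_fun_def by blast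
  then show ?thesis
    unfolding conv_split[OF assms(4)] using assms(2,4,5) by (simp add: bar_def counit_def)
qed

definition zeta_factors :: "(nat list \<Rightarrow> 'a::field) \<Rightarrow> (nat list \<Rightarrow> 'a) \<Rightarrow> bool" where
  "zeta_factors p m \<longleftrightarrow> is_character p \<and> is_even_fun p \<and> is_character m \<and> is_odd_fun m \<and>
      (\<forall>\<alpha>. is_comp \<alpha> \<longrightarrow> zeta \<alpha> = conv p m \<alpha>)"

lemma zeta_factors_split:
  assumes "zeta_factors p m" and "is_comp \<alpha>" and "\<alpha> \<noteq> []"
  shows "zeta \<alpha> = m \<alpha> + p \<alpha> + (\<Sum>i\<in>{1..<length \<alpha>}. p (take i \<alpha>) * m (drop i \<alpha>))"
  using assms by (simp add: zeta_factors_def conv_split is_characterD(1))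

text \<open>The proper prefixes and suffixes of \<open>\<alpha>\<close> determine \<open>m \<alpha>\<close> through oddness when \<open>|\<alpha>|\<close> is
  even, and \<open>p \<alpha> = 0\<close> when \<open>|\<alpha>|\<close> is odd; then \<open>\<zeta> = p m\<close> determines the other value.\<close>
lemma zeta_factors_agree_step:
  fixes p m p' m' :: "nat list \<Rightarrow> 'a::field"
  assumes two: "(2::'a) \<noteq> 0" and pm: "zeta_factors p m" and pm': "zeta_factors p' m'"
    and comp: "is_comp \<alpha>" and nonempty: "\<alpha> \<noteq> []"
    and smaller: "\<And>\<beta>. is_comp \<beta> \<Longrightarrow> sum_list \<beta> < sum_list \<alpha> \<Longrightarrow> p \<beta> = p' \<beta> \<and> m \<beta> = m' \<beta>"
  shows "p \<alpha> = p' \<alpha> \<and> m \<alpha> = m' \<alpha>"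
proof -
  have "p (take i \<alpha>) = p' (take i \<alpha>) \<and> m (take i \<alpha>) = m' (take i \<alpha>) \<and>
      p (drop i \<alpha>) = p' (drop i \<alpha>) \<and> m (drop i \<alpha>) = m' (drop i \<alpha>)" if "i \<in> {1..<length \<alpha>}" for i
    using that smaller sum_list_pieces_less[OF comp is_comp_Nil, of i 0] comp
    by (auto simp: is_comp_take is_comp_drop)
  then have proper: "(\<Sum>i\<in>{1..<length \<alpha>}. p (take i \<alpha>) * m (drop i \<alpha>))
        = (\<Sum>i\<in>{1..<length \<alpha>}. p' (take i \<alpha>) * m' (drop i \<alpha>))"
      "(\<Sum>i\<in>{1..<length \<alpha>}. bar m (take i \<alpha>) * m (drop i \<alpha>))
        = (\<Sum>i\<in>{1..<length \<alpha>}. bar m' (take i \<alpha>) * m' (drop i \<alpha>))"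
    by (auto simp: bar_def intro!: sum.cong)
  have factors: "is_character m" "is_odd_fun m" "is_even_fun p"
      "is_character m'" "is_odd_fun m'" "is_even_fun p'"
    using pm pm' by (simp_all add: zeta_factors_def)
  note zeta_split = zeta_factors_split[OF pm comp nonempty] zeta_factors_split[OF pm' comp nonempty]
  show ?thesis
  proof (cases "even (sum_list \<alpha>)")
    case True
    have "2 * m \<alpha> + (\<Sum>i\<in>{1..<length \<alpha>}. bar m (take i \<alpha>) * m (drop i \<alpha>)) = 0"
      "2 * m' \<alpha> + (\<Sum>i\<in>{1..<length \<alpha>}. bar m' (take i \<alpha>) * m' (drop i \<alpha>)) = 0"
      using odd_fun_even_weight[OF factors(2) is_characterD(1)[OF factors(1)] comp nonempty True]
        odd_fun_even_weight[OF factors(5) is_characterD(1)[OF factors(4)] comp nonempty True]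
      by simp_all
    then have "2 * m \<alpha> = 2 * m' \<alpha>"
      using proper(2) by (metis add_right_cancel)
    then have "m \<alpha> = m' \<alpha>"
      using two by simp
    then show ?thesis
      using zeta_split proper(1) by simp
  next
    case False
    then have "p \<alpha> = 0" "p' \<alpha> = 0"
      using factors comp two by (simp_all add: even_fun_odd_weight)
    then show ?thesis
      using zeta_split proper(1) by simp
  qed
qed

lemma zeta_factors_unique:
  fixes p m p' m' :: "nat list \<Rightarrow> 'a::field"
  assumes two: "(2::'a) \<noteq> 0" and pm: "zeta_factors p m" and pm': "zeta_factors p' m'"
  shows "p' = p \<and> m' = m"
proof -
  have "p \<alpha> = p' \<alpha> \<and> m \<alpha> = m' \<alpha>" if "is_comp \<alpha>" for \<alpha>
    using that
  proof (induction "sum_list \<alpha>" arbitrary: \<alpha> rule: less_induct)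
    case less
    then show ?case
      using zeta_factors_agree_step[OF two pm pm'] pm pm'
      by (cases "\<alpha> = []") (simp_all add: zeta_factors_def is_characterD(1))
  qed
  moreover have "p \<alpha> = p' \<alpha> \<and> m \<alpha> = m' \<alpha>" if "\<not> is_comp \<alpha>" for \<alpha>
    using pm pm' that by (simp add: zeta_factors_def is_characterD(2))
  ultimately show ?thesis
    by (metis ext)
qed

lemma zeta_pm_eqI:
  fixes p m :: "nat list \<Rightarrow> 'a::field"
  assumes "(2::'a) \<noteq> 0" and "zeta_factors p m"
  shows "zeta_pm = (p, m)"
  unfolding zeta_pm_def
proof (rule the_equality)
  show "case (p, m) of (p, m) \<Rightarrow> is_character p \<and> is_even_fun p \<and> is_character m \<and> is_odd_fun m \<and>
      (\<forall>\<alpha>. is_comp \<alpha> \<longrightarrow> zeta \<alpha> = conv p m \<alpha>)"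
    using assms(2) by (simp add: zeta_factors_def)
next
  fix x :: "(nat list \<Rightarrow> 'a) \<times> (nat list \<Rightarrow> 'a)"
  assume "case x of (p, m) \<Rightarrow> is_character p \<and> is_even_fun p \<and> is_character m \<and> is_odd_fun m \<and>
      (\<forall>\<alpha>. is_comp \<alpha> \<longrightarrow> zeta \<alpha> = conv p m \<alpha>)"
  then have "zeta_factors (fst x) (snd x)"
    by (simp add: zeta_factors_def split_beta)
  then show "x = (p, m)"
    using zeta_factors_unique[OF assms] by (simp add: prod_eq_iff)
qed

section \<open>Central binomial coefficients\<close>

lemma prod_minus_half_mult:
  "(\<Prod>i=0..<k. (-1/2::real) - of_nat i) * (4 ^ k * fact k) = (-1) ^ k * fact (2 * k)"
proof (induction k)
  case (Suc k)
  let ?P = "\<Prod>i=0..<k. (-1/2::real) - of_nat i"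
  have "(\<Prod>i=0..<Suc k. (-1/2::real) - of_nat i) * (4 ^ Suc k * fact (Suc k))
      = (?P * (4 ^ k * fact k)) * (((-1/2) - of_nat k) * 4 * (of_nat k + 1))"
    by (simp add: prod.atLeast0_lessThan_Suc fact_Suc algebra_simps)
  also have "\<dots> = (-1) ^ k * fact (2 * k) * (((-1/2) - of_nat k) * 4 * (of_nat k + 1))"
    by (simp only: Suc)
  also have "\<dots> = (-1) ^ Suc k * fact (2 * Suc k)"
  proof -
    have "2 * Suc k = Suc (Suc (2 * k))"
      by simp
    then have "fact (2 * Suc k) = (of_nat (Suc (Suc (2 * k))) * of_nat (Suc (2 * k)) * fact (2 * k) :: real)"
      by (simp only: fact_Suc mult.assoc)
    moreover have "((-1/2::real) - of_nat k) * 4 * (of_nat k + 1) = - (of_nat (Suc (Suc (2 * k))) * of_nat (Suc (2 * k)))"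
      by (simp add: algebra_simps)
    ultimately show ?thesis
      by simp
  qed
  finally show ?case .
qed simp

lemma gchoose_minus_half: "((-1/2::real) gchoose k) = (-1) ^ k * real ((2 * k) choose k) / 4 ^ k"
proof -
  have "fact k * fact k * ((2 * k) choose k) = (fact (2 * k) :: nat)"
    using binomial_fact_lemma[of k "2 * k"] by simp
  then have "fact (2 * k) = fact k * fact k * real ((2 * k) choose k)"
    by (metis of_nat_fact of_nat_mult)
  moreover have "((-1/2::real) gchoose k) * fact k * (4 ^ k * fact k) = (-1) ^ k * fact (2 * k)"
    using prod_minus_half_mult[of k] by (simp add: gbinomial_mult_fact')
  ultimately have "fact k * fact k * (4 ^ k * ((-1/2::real) gchoose k))
      = fact k * fact k * ((-1) ^ k * real ((2 * k) choose k))"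
    by (simp add: ac_simps)
  then show ?thesis
    by (simp add: field_simps)
qed

text \<open>Vandermonde's identity for \<open>-1/2 + -1/2 = -1\<close>.\<close>
lemma sum_central_binomial_convolution:
  "(\<Sum>a=0..n. ((2 * a) choose a) * ((2 * (n - a)) choose (n - a))) = 4 ^ n"
proof -
  have "(\<Sum>a=0..n. ((-1/2::real) gchoose a) * ((-1/2) gchoose (n - a))) = (-1) ^ n"
    using gbinomial_Vandermonde[of "-1/2::real" "-1/2" n] gbinomial_minus[of "1::real" n]
    by (simp add: binomial_gbinomial[symmetric])
  moreover have "((-1/2::real) gchoose a) * ((-1/2) gchoose (n - a))
      = (-1) ^ n / 4 ^ n * (real ((2 * a) choose a) * real ((2 * (n - a)) choose (n - a)))" if "a \<le> n" for a
  proof -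
    have "(-1::real) ^ a * (-1) ^ (n - a) = (-1) ^ n" "(4::real) ^ a * 4 ^ (n - a) = 4 ^ n"
      using that by (simp_all flip: power_add)
    then show ?thesis
      unfolding gchoose_minus_half by (simp add: field_simps)
  qed
  ultimately have "(-1) ^ n / 4 ^ n * real (\<Sum>a=0..n. ((2 * a) choose a) * ((2 * (n - a)) choose (n - a)))
      = (-1::real) ^ n"
    by (simp add: sum_distrib_left)
  then have "real (\<Sum>a=0..n. ((2 * a) choose a) * ((2 * (n - a)) choose (n - a))) = real (4 ^ n)"
    by (simp add: field_simps)
  then show ?thesis
    by (simp only: of_nat_eq_iff)
qed

text \<open>The coefficient of \<open>x\<^sup>j\<close> in \<open>(1 - x)\<^bsup>-1/2\<^esup>\<close>.\<close>
definition isqrt_coeff :: "nat \<Rightarrow> 'a::field" where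
  "isqrt_coeff j = of_nat ((2 * j) choose j) / 2 ^ (2 * j)"

lemma isqrt_coeff_convolution:
  assumes "(2::'a::field) \<noteq> 0"
  shows "(\<Sum>a=0..n. isqrt_coeff a * isqrt_coeff (n - a)) = (1::'a)"
proof -
  have "(\<Sum>a=0..n. isqrt_coeff a * isqrt_coeff (n - a))
      = (\<Sum>a=0..n. of_nat (((2 * a) choose a) * ((2 * (n - a)) choose (n - a))) / (2::'a) ^ (2 * n))"
  proof (intro sum.cong refl)
    fix a
    assume "a \<in> {0..n}"
    then have "2 * a + 2 * (n - a) = 2 * n"
      by simp
    then have "(2::'a) ^ (2 * a) * 2 ^ (2 * (n - a)) = 2 ^ (2 * n)"
      by (metis power_add)
    then show "isqrt_coeff a * isqrt_coeff (n - a)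
        = of_nat (((2 * a) choose a) * ((2 * (n - a)) choose (n - a))) / (2::'a) ^ (2 * n)"
      by (simp add: isqrt_coeff_def)
  qed
  also have "\<dots> = of_nat (\<Sum>a=0..n. ((2 * a) choose a) * ((2 * (n - a)) choose (n - a))) / (2::'a) ^ (2 * n)"
    by (simp only: sum_divide_distrib of_nat_sum)
  also have "\<dots> = of_nat (4 ^ n) / (2::'a) ^ (2 * n)"
    by (simp only: sum_central_binomial_convolution)
  also have "\<dots> = 1"
  proof -
    have "(of_nat (4 ^ n) :: 'a) = 2 ^ (2 * n)"
      by (simp add: power_mult)
    then show ?thesis
      using assms by simp
  qed
  finally show ?thesis .
qed

lemma sum_atLeast0_atMost_odd_split:
  fixes f :: "nat \<Rightarrow> 'b::comm_monoid_add"
  shows "(\<Sum>j=0..2 * n + 1. f j) = (\<Sum>a=0..n. f (2 * a) + f (2 * a + 1))"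
  by (induction n) (simp_all add: numeral_2_eq_2 add.assoc)

lemma sum_atLeast0_atMost_even_split:
  fixes f :: "nat \<Rightarrow> 'b::comm_monoid_add"
  shows "(\<Sum>j=0..2 * n. f j) = (\<Sum>a=0..n. f (2 * a)) + (\<Sum>a<n. f (2 * a + 1))"
proof (induction n)
  case (Suc n)
  have two_Suc: "2 * Suc n = Suc (Suc (2 * n))"
    by simp
  show ?case
    unfolding two_Suc sum.atLeast0_atMost_Suc Suc by (simp add: ac_simps)
qed simp

text \<open>Each parity class of \<open>j\<close> contributes one full convolution of \<open>isqrt_coeff\<close>.\<close>
lemma isqrt_coeff_half_convolution:
  fixes u v :: "'a::field"
  assumes two: "(2::'a) \<noteq> 0" and "1 \<le> K"
  shows "(\<Sum>j=0..K. (if even j then u else v) * (isqrt_coeff (j div 2) * isqrt_coeff ((K - j) div 2))) = u + v"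
proof (cases "even K")
  case True
  then obtain m where "K = 2 * m"
    by blast
  with assms(2) obtain n where K: "K = 2 * Suc n"
    by (cases m) auto
  have "(2 * Suc n - 2 * a) div 2 = Suc n - a" "(2 * Suc n - (2 * a + 1)) div 2 = n - a" for a
    by auto
  then show ?thesis
    unfolding K sum_atLeast0_atMost_even_split
    using isqrt_coeff_convolution[OF two, of n] isqrt_coeff_convolution[OF two, of "Suc n"]
    by (simp add: lessThan_Suc_atMost atLeast0AtMost flip: sum_distrib_left)
next
  case False
  then obtain n where K: "K = 2 * n + 1"
    by (metis oddE)
  have "(2 * n + 1 - 2 * a) div 2 = n - a" "(2 * n + 1 - (2 * a + 1)) div 2 = n - a" for a
    by auto
  then show ?thesis
    unfolding K sum_atLeast0_atMost_odd_split
    using isqrt_coeff_convolution[OF two, of n]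
    by (simp flip: distrib_right sum_distrib_left)
qed

lemma bicat_0: "bicat 0 j = (2 * j) choose j"
  using binomial_fact'[of j "2 * j"] by (simp add: bicat_def)

lemma Suc_mult_choose_Suc: "Suc t * ((2 * t) choose Suc t) = t * ((2 * t) choose t)"
proof -
  have "Suc t * ((2 * t) choose Suc t) = (2 * t) * ((2 * t - 1) choose t)"
    by (rule binomial_absorption)
  also have "\<dots> = (2 * t - t) * ((2 * t) choose t)"
    by (rule binomial_absorb_comp[symmetric])
  finally show ?thesis
    by simp
qed

lemma bicat_1: "bicat 1 t = 2 * (((2 * t) choose t) - ((2 * t) choose Suc t))"
proof -
  let ?B = "(2 * t) choose t" and ?C = "(2 * t) choose Suc t"
  have "Suc t * (?B - ?C) = ?B"
    using Suc_mult_choose_Suc[of t] by (simp add: diff_mult_distrib2)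
  have "fact (Suc t) * fact t * (?B - ?C) = fact t * fact t * (Suc t * (?B - ?C))"
    by (simp only: fact_Suc of_nat_id ac_simps)
  also have "\<dots> = fact t * fact t * ?B"
    by (simp only: \<open>Suc t * (?B - ?C) = ?B\<close>)
  also have "\<dots> = fact (2 * t)"
    using binomial_fact_lemma[of t "2 * t"] by simp
  finally have "fact (2 * t) = fact (Suc t) * fact t * (?B - ?C)" ..
  then have "bicat 1 t = 2 * (fact (Suc t) * fact t * (?B - ?C)) div (fact (Suc t) * fact t)"
    by (simp add: bicat_def)
  then show ?thesis
    by simp
qed

lemma central_binomial_Suc_add_bicat_1: "((2 * Suc t) choose Suc t) + bicat 1 t = 4 * ((2 * t) choose t)"
proof -
  let ?B = "(2 * t) choose t" and ?C = "(2 * t) choose Suc t"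
  have "?C \<le> ?B"
    using Suc_mult_choose_Suc[of t] by (metis Suc_mult_le_cancel1 le_add2 mult_le_mono1 plus_1_eq_Suc)
  have "Suc (2 * t) choose t = ?C + ?B"
  proof (cases t)
    case (Suc s)
    have "(2 * t) choose s = (2 * t) choose (2 * t - s)"
      by (rule binomial_symmetric) (simp add: Suc)
    also have "2 * t - s = Suc t"
      using Suc by simp
    finally show ?thesis
      using Suc binomial_Suc_Suc[of "2 * t" s] by simp
  qed simp
  moreover have "(2 * Suc t) choose Suc t = (Suc (2 * t) choose t) + (Suc (2 * t) choose Suc t)"
    by simp
  ultimately have "(2 * Suc t) choose Suc t = 2 * ?B + 2 * ?C"
    by simp
  with \<open>?C \<le> ?B\<close> show ?thesis
    unfolding bicat_1 by simp
qed

lemma isqrt_coeff_diff: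
  assumes "(2::'a::field) \<noteq> 0"
  shows "isqrt_coeff t - isqrt_coeff (Suc t) = (of_nat (bicat 1 t) / 2 ^ (2 * Suc t) :: 'a)"
proof -
  let ?B = "(2 * t) choose t" and ?B' = "(2 * Suc t) choose Suc t"
  have "(4::'a) \<noteq> 0"
    using no_zero_divisors[OF assms assms] by simp
  moreover have "(2::'a) ^ (2 * Suc t) = 4 * 2 ^ (2 * t)"
    by (simp add: power_add)
  ultimately have "isqrt_coeff t - isqrt_coeff (Suc t) = (4 * of_nat ?B - of_nat ?B') / (2::'a) ^ (2 * Suc t)"
    unfolding isqrt_coeff_def by (simp add: diff_divide_distrib del: binomial_Suc_Suc)
  also have "4 * of_nat ?B - of_nat ?B' = (of_nat (bicat 1 t) :: 'a)"
    by (metis add_diff_cancel_left' central_binomial_Suc_add_bicat_1 of_nat_add of_nat_mult of_nat_numeral)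
  finally show ?thesis .
qed

section \<open>The odd part of the universal character\<close>

definition ends_odd :: "nat list \<Rightarrow> bool" where
  "ends_odd \<gamma> \<longleftrightarrow> \<gamma> = [] \<or> odd (last \<gamma>)"

definition zeta_odd :: "nat list \<Rightarrow> 'a::field" where
  "zeta_odd \<gamma> = (if is_comp \<gamma> \<and> ends_odd \<gamma> then (-1) ^ k_even \<gamma> * isqrt_coeff (k_odd \<gamma> div 2) else 0)"

lemma zeta_odd_Nil [simp]: "zeta_odd [] = 1"
  by (simp add: zeta_odd_def ends_odd_def isqrt_coeff_def)

lemma ends_odd_drop: "ends_odd \<gamma> \<Longrightarrow> ends_odd (drop i \<gamma>)"
  by (cases "i < length \<gamma>") (auto simp: ends_odd_def last_drop)

text \<open>The prefixes of \<open>\<alpha>\<close> that end with an odd part (together with \<open>[]\<close>) are numbered by their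
  number of odd parts \<open>0, \<dots>, k_odd \<alpha>\<close>.\<close>
lemma sum_prefixes_ends_odd:
  "(\<Sum>i=0..length \<alpha>. if ends_odd (take i \<alpha>) then F (k_odd (take i \<alpha>)) else (0::'b::comm_monoid_add))
    = (\<Sum>j=0..k_odd \<alpha>. F j)"
proof (induction \<alpha> rule: rev_induct)
  case (snoc a \<alpha>)
  have "(\<Sum>i=0..length \<alpha>. if ends_odd (take i (\<alpha> @ [a])) then F (k_odd (take i (\<alpha> @ [a]))) else 0)
      = (\<Sum>j=0..k_odd \<alpha>. F j)"
    unfolding snoc.IH[symmetric] by (intro sum.cong refl) simp
  then show ?case
    by (simp add: ends_odd_def k_odd_def)
qed (simp add: ends_odd_def)

lemma zeta_odd_take_mult_drop:
  assumes comp: "is_comp \<gamma>" and nonempty: "\<gamma> \<noteq> []"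
  shows "zeta_odd (take i \<gamma>) * zeta_odd (drop i \<gamma>) =
    (if odd (last \<gamma>) \<and> ends_odd (take i \<gamma>)
     then (-1) ^ k_even \<gamma> * (isqrt_coeff (k_odd (take i \<gamma>) div 2)
       * isqrt_coeff ((k_odd \<gamma> - k_odd (take i \<gamma>)) div 2))
     else (0::'a::field))"
proof (cases "odd (last \<gamma>)")
  case False
  then show ?thesis
    using nonempty by (cases "i < length \<gamma>") (simp_all add: zeta_odd_def ends_odd_def last_drop)
next
  case True
  then have "ends_odd (drop i \<gamma>)"
    by (intro ends_odd_drop) (simp add: ends_odd_def)
  moreover have "(-1::'a) ^ k_even (take i \<gamma>) * (-1) ^ k_even (drop i \<gamma>) = (-1) ^ k_even \<gamma>"
    by (metis append_take_drop_id k_even_append power_add)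
  moreover have "k_odd (drop i \<gamma>) = k_odd \<gamma> - k_odd (take i \<gamma>)"
    by (metis append_take_drop_id k_odd_append diff_add_inverse)
  ultimately show ?thesis
    using comp True by (auto simp: zeta_odd_def is_comp_take is_comp_drop ac_simps)
qed

lemma sum_deconc_zeta_odd_weighted:
  fixes w :: "nat \<Rightarrow> 'a::field"
  assumes comp: "is_comp \<gamma>" and nonempty: "\<gamma> \<noteq> []"
  shows "(\<Sum>i=0..length \<gamma>. w (k_odd (take i \<gamma>)) * (zeta_odd (take i \<gamma>) * zeta_odd (drop i \<gamma>)))
    = (if odd (last \<gamma>)
       then (-1) ^ k_even \<gamma> * (\<Sum>j=0..k_odd \<gamma>. w j * (isqrt_coeff (j div 2) * isqrt_coeff ((k_odd \<gamma> - j) div 2)))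
       else 0)"
proof (cases "odd (last \<gamma>)")
  case True
  let ?K = "k_odd \<gamma>"
  have "(\<Sum>i=0..length \<gamma>. w (k_odd (take i \<gamma>)) * (zeta_odd (take i \<gamma>) * zeta_odd (drop i \<gamma>)))
      = (\<Sum>i=0..length \<gamma>. if ends_odd (take i \<gamma>) then (-1) ^ k_even \<gamma> * (w (k_odd (take i \<gamma>))
          * (isqrt_coeff (k_odd (take i \<gamma>) div 2) * isqrt_coeff ((?K - k_odd (take i \<gamma>)) div 2))) else 0)"
    by (intro sum.cong refl) (simp add: zeta_odd_take_mult_drop[OF comp nonempty] True)
  also have "\<dots> = (\<Sum>j=0..?K. (-1) ^ k_even \<gamma> * (w j * (isqrt_coeff (j div 2) * isqrt_coeff ((?K - j) div 2))))"
    by (rule sum_prefixes_ends_odd)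
  finally show ?thesis
    using True by (simp add: sum_distrib_left)
qed (simp add: zeta_odd_take_mult_drop[OF comp nonempty])

lemma conv_zeta_odd_self:
  assumes two: "(2::'a::field) \<noteq> 0" and comp: "is_comp \<gamma>"
  shows "conv zeta_odd zeta_odd \<gamma> = (conv even_sign zeta \<gamma> :: 'a)"
proof (cases "\<gamma> = []")
  case True
  then show ?thesis
    by (simp add: conv_def even_sign_def zeta_def)
next
  case False
  then obtain \<beta> a where \<gamma>: "\<gamma> = \<beta> @ [a]"
    by (metis rev_exhaust)
  have "conv zeta_odd zeta_odd \<gamma> = (if odd (last \<gamma>) then (-1) ^ k_even \<gamma> * 2 else (0::'a))"
    using sum_deconc_zeta_odd_weighted[OF comp False, of "\<lambda>_. 1"]
      isqrt_coeff_half_convolution[OF two one_le_k_odd[OF False], of 1 1]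
    by (auto simp: conv_def)
  moreover have "conv even_sign zeta \<gamma> = (-1) ^ k_even \<beta> + ((-1) ^ k_even \<gamma> :: 'a)"
    using comp unfolding \<gamma> by (simp add: conv_zeta_right even_sign_def)
  ultimately show ?thesis
    by (simp add: \<gamma> k_even_Cons)
qed

lemma is_character_zeta_odd:
  assumes "(2::'a::field) \<noteq> 0"
  shows "is_character (zeta_odd :: nat list \<Rightarrow> 'a)"
  by (rule is_character_sqrt[OF assms is_character_conv[OF is_character_even_sign is_character_zeta]])
    (simp_all add: zeta_odd_def conv_zeta_odd_self[OF assms] ends_odd_def isqrt_coeff_def)

lemma is_odd_fun_zeta_odd:
  assumes two: "(2::'a::field) \<noteq> 0"
  shows "is_odd_fun (zeta_odd :: nat list \<Rightarrow> 'a)"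
proof (rule is_odd_funI)
  fix \<alpha> :: "nat list"
  assume comp: "is_comp \<alpha>"
  show "conv (bar zeta_odd) zeta_odd \<alpha> = (counit \<alpha> :: 'a)"
  proof (cases "\<alpha> = []")
    case False
    have "conv (bar zeta_odd) zeta_odd \<alpha>
        = (\<Sum>i=0..length \<alpha>. (-1) ^ k_odd (take i \<alpha>) * (zeta_odd (take i \<alpha>) * (zeta_odd (drop i \<alpha>) :: 'a)))"
      by (simp add: conv_def bar_eq_k_odd_sign ac_simps)
    also have "\<dots> = 0"
      unfolding sum_deconc_zeta_odd_weighted[OF comp False, of "\<lambda>j. (-1) ^ j"]
      using isqrt_coeff_half_convolution[OF two one_le_k_odd[OF False], of 1 "-1"]
      by (auto simp: minus_one_power_iff)
    finally show ?thesis
      using False by (simp add: counit_def)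
  qed (simp add: conv_def counit_def bar_def)
qed

section \<open>The even part of the universal character\<close>

definition zeta_even :: "nat list \<Rightarrow> 'a::field" where
  "zeta_even = conv zeta (bar zeta_odd)"

lemma zeta_even_Cons_eq:
  assumes comp: "is_comp (a # \<beta>)"
  shows "zeta_even (a # \<beta>) =
    (if \<beta> = [] then (if even a then 1 else 0)
     else if odd a \<and> odd (last \<beta>) \<and> odd (k_odd \<beta>)
     then (-1) ^ k_even \<beta> * (isqrt_coeff (Suc (k_odd \<beta> div 2)) - isqrt_coeff (k_odd \<beta> div 2))
     else 0)"
proof -
  have zeta_even: "zeta_even (a # \<beta>) = (-1) ^ a * (-1) ^ k_odd \<beta> * zeta_odd (a # \<beta>) + (-1) ^ k_odd \<beta> * zeta_odd \<beta>"
    using comp by (simp add: zeta_even_def conv_zeta_left bar_def power_add neg1_power_sum_list)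
  consider (single) "\<beta> = []" | (even_last) "\<beta> \<noteq> []" "even (last \<beta>)" | (odd_last) "\<beta> \<noteq> []" "odd (last \<beta>)"
    by blast
  then show ?thesis
  proof cases
    case single
    then show ?thesis
      using comp unfolding zeta_even by (simp add: zeta_odd_def ends_odd_def k_even_def k_odd_def isqrt_coeff_def)
  next
    case even_last
    then show ?thesis
      unfolding zeta_even by (simp add: zeta_odd_def ends_odd_def)
  next
    case odd_last
    then have zeta_odd: "zeta_odd \<beta> = (-1) ^ k_even \<beta> * isqrt_coeff (k_odd \<beta> div 2)"
      "zeta_odd (a # \<beta>) = (if even a then -1 else 1) * (-1) ^ k_even \<beta> * isqrt_coeff (k_odd (a # \<beta>) div 2)"
      using comp by (simp_all add: zeta_odd_def ends_odd_def k_even_Cons)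
    from odd_last show ?thesis
      unfolding zeta_even zeta_odd by (cases "even (k_odd \<beta>)") (auto simp: k_odd_Cons minus_one_power_iff algebra_simps)
  qed
qed

lemma zeta_even_odd_weight:
  assumes "is_comp \<alpha>" and "odd (sum_list \<alpha>)"
  shows "zeta_even \<alpha> = 0"
proof -
  obtain a \<beta> where \<alpha>: "\<alpha> = a # \<beta>"
    using assms(2) by (cases \<alpha>) auto
  have "odd (k_odd \<alpha>)"
    using assms(2) by (simp add: even_sum_list_iff)
  then show ?thesis
    using assms(1,2) by (auto simp: \<alpha> zeta_even_Cons_eq k_odd_Cons)
qed

lemma is_even_fun_zeta_even: "is_even_fun zeta_even"
  unfolding is_even_fun_def bar_def
  by (metis mult_1 neg_one_even_power zeta_even_odd_weight mult_zero_right)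

lemma zeta_factors_zeta_even_odd:
  assumes two: "(2::'a::field) \<noteq> 0"
  shows "zeta_factors (zeta_even :: nat list \<Rightarrow> 'a) zeta_odd"
  unfolding zeta_factors_def
proof (intro conjI allI impI)
  show "is_character (zeta_even :: nat list \<Rightarrow> 'a)"
    unfolding zeta_even_def
    by (intro is_character_conv is_character_zeta is_character_bar is_character_zeta_odd two)
  fix \<alpha> :: "nat list"
  assume comp: "is_comp \<alpha>"
  have "(conv zeta_even zeta_odd \<alpha> :: 'a) = conv zeta (conv (bar zeta_odd) zeta_odd) \<alpha>"
    by (simp add: zeta_even_def conv_assoc)
  also have "\<dots> = conv zeta counit \<alpha>"
  proof -
    have inverse: "conv (bar zeta_odd) zeta_odd (drop i \<alpha>) = (counit (drop i \<alpha>) :: 'a)" for i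
      using is_odd_fun_zeta_odd[OF two] is_comp_drop[OF comp] unfolding is_odd_fun_def by blast
    show ?thesis
      unfolding conv_def[of zeta] inverse ..
  qed
  also have "\<dots> = zeta \<alpha>"
    by (rule conv_counit_right)
  finally show "zeta \<alpha> = (conv zeta_even zeta_odd \<alpha> :: 'a)"
    by (rule sym)
qed (simp_all add: is_even_fun_zeta_even is_character_zeta_odd is_odd_fun_zeta_odd two)

lemma zeta_plus_minus_eq:
  assumes "(2::'a::field) \<noteq> 0"
  shows "(zeta_plus :: nat list \<Rightarrow> 'a) = zeta_even" and "(zeta_minus :: nat list \<Rightarrow> 'a) = zeta_odd"
proof -
  have pm: "(zeta_pm :: (nat list \<Rightarrow> 'a) \<times> _) = (zeta_even, zeta_odd)"
    by (rule zeta_pm_eqI[OF assms zeta_factors_zeta_even_odd[OF assms]])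
  show "(zeta_plus :: nat list \<Rightarrow> 'a) = zeta_even" and "(zeta_minus :: nat list \<Rightarrow> 'a) = zeta_odd"
    unfolding zeta_plus_def zeta_minus_def pm by simp_all
qed

lemma zeta_even_eq:
  assumes two: "(2::'a::field) \<noteq> 0" and comp: "is_comp \<alpha>" and "\<alpha> \<noteq> []"
  shows "(zeta_even \<alpha> :: 'a) =
    (if odd (hd \<alpha>) \<and> odd (last \<alpha>) \<and> even (sum_list \<alpha>)
     then (-1) ^ (k_even \<alpha> + 1) / 2 ^ k_odd \<alpha> * of_nat (bicat 1 (k_odd \<alpha> div 2 - 1))
     else if length \<alpha> = 1 \<and> even (sum_list \<alpha>) then 1
     else 0)"
proof -
  obtain a \<beta> where \<alpha>: "\<alpha> = a # \<beta>"
    using \<open>\<alpha> \<noteq> []\<close> by (cases \<alpha>) auto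
  have parity: "even (sum_list \<alpha>) \<longleftrightarrow> (odd a \<longleftrightarrow> odd (k_odd \<beta>))"
    by (simp add: \<alpha> even_sum_list_iff k_odd_Cons)
  consider (odd_ends) "odd a" "\<beta> \<noteq> []" "odd (last \<beta>)" "odd (k_odd \<beta>)" | (single) "\<beta> = []"
    | (other) "\<beta> \<noteq> []" "\<not> (odd a \<and> odd (last \<beta>) \<and> odd (k_odd \<beta>))"
    by blast
  then show ?thesis
  proof cases
    case odd_ends
    define t where "t = k_odd \<beta> div 2"
    have "k_odd \<alpha> = 2 * Suc t" "k_even \<alpha> = k_even \<beta>"
      using odd_ends by (simp_all add: \<alpha> t_def k_odd_Cons k_even_Cons)
    moreover have "zeta_even \<alpha> = (-1) ^ k_even \<beta> * (isqrt_coeff (Suc t) - isqrt_coeff t :: 'a)"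
      using zeta_even_Cons_eq[OF comp[unfolded \<alpha>]] odd_ends by (simp add: \<alpha> t_def)
    moreover have "isqrt_coeff (Suc t) - isqrt_coeff t = - (of_nat (bicat 1 t) / 2 ^ (2 * Suc t) :: 'a)"
      by (metis isqrt_coeff_diff[OF two] minus_diff_eq)
    ultimately show ?thesis
      using odd_ends parity by (simp add: \<alpha>)
  next
    case single
    then show ?thesis
      using comp by (simp add: \<alpha> zeta_even_Cons_eq)
  next
    case other
    then show ?thesis
      using comp parity by (auto simp: \<alpha> zeta_even_Cons_eq)
  qed
qed

theorem theorem3p2:
  fixes \<alpha> :: "nat list"
  assumes char2: "(2::'a::field) \<noteq> 0"
    and comp: "is_comp \<alpha>"
    and pos: "sum_list \<alpha> > 0"
  shows "(zeta_minus :: nat list \<Rightarrow> 'a) \<alpha> =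
           (if odd (last \<alpha>)
            then (-1) ^ k_even \<alpha> / 2 ^ (2 * (k_odd \<alpha> div 2)) * of_nat (bicat 0 (k_odd \<alpha> div 2))
            else 0)
       \<and> (zeta_plus :: nat list \<Rightarrow> 'a) \<alpha> =
           (if odd (hd \<alpha>) \<and> odd (last \<alpha>) \<and> even (sum_list \<alpha>)
            then (-1) ^ (k_even \<alpha> + 1) / 2 ^ k_odd \<alpha> * of_nat (bicat 1 (k_odd \<alpha> div 2 - 1))
            else if length \<alpha> = 1 \<and> even (sum_list \<alpha>) then 1
            else 0)
       \<and> (zeta_minus :: nat list \<Rightarrow> 'a) [] = 1
       \<and> (zeta_plus :: nat list \<Rightarrow> 'a) [] = 1"
proof -
  have "\<alpha> \<noteq> []"
    using pos by auto
  then have "(zeta_odd \<alpha> :: 'a) =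
      (if odd (last \<alpha>) then (-1) ^ k_even \<alpha> / 2 ^ (2 * (k_odd \<alpha> div 2)) * of_nat (bicat 0 (k_odd \<alpha> div 2))
       else 0)"
    using comp by (simp add: zeta_odd_def ends_odd_def isqrt_coeff_def bicat_0)
  moreover have "(zeta_even [] :: 'a) = 1"
    by (simp add: zeta_even_def conv_def zeta_def bar_def)
  ultimately show ?thesis
    using zeta_even_eq[OF char2 comp \<open>\<alpha> \<noteq> []\<close>] by (simp add: zeta_plus_minus_eq[OF char2])
qed

end
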